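(* Let $k=4l+3$ for a nonnegative integer $l$, and let $G$ be a $k$-uniform tight cycle (an $s$-cycle with $s=k-1$) with $n$ vertices. Then the maximum degree of $G$ is $\Delta=k$. If $n$ is even, then $\lambda(\mathcal{L})\ge\Delta+1=k+1$.
   Context: A $k$-uniform $s$-cycle with $m$ edges has vertex set $\mathbb{Z}_n$, $n=m(k-s)$ (vertex $n+i$ identified with $i$), and edges $e_j=\{j(k-s)+1,\ldots,j(k-s)+k\}$, $j=0,\ldots,m-1$; it is assumed that $n\ge 2k-s$ (for $s=k-1$: $n=m\ge k+1$). The degree $d_i$ of a vertex is the number of edges containing it. A Laplacian H-eigenvalue of $G$ is a real $\lambda$ for which there exists $\mathbf{x}\in\mathbb{R}^n\setminus\{0\}$ with $\lambda x_i^{k-1}=d_ix_i^{k-1}-\sum_{e\ni i}\prod_{j\in e\setminus\{i\}}x_j$ for all $i$ (equivalently, an H-eigenvalue of the Laplacian tensor $\mathcal{L}=\mathcal{D}-\mathcal{A}$, with $\mathcal{A}$ the adjacency tensor having entries $1/(k-1)!$ on edges and $\mathcal{D}$ the diagonal degree tensor); $\lambda(\mathcal{L})$ is the largest Laplacian H-eigenvalue. *)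

theory Defs
  imports Complex_Main
begin

definition hdegree :: "nat set set \<Rightarrow> nat \<Rightarrow> nat" where
  "hdegree E i = card {e \<in> E. i \<in> e}"

definition max_degree :: "nat \<Rightarrow> nat set set \<Rightarrow> nat" where
  "max_degree n E = Max (hdegree E ` {0..<n})"

text \<open>k-uniform s-cycle with m edges on Z_n, n = m(k-s); vertex v is represented by v mod n in {0..<n}.\<close>
definition s_cycle_edges :: "nat \<Rightarrow> nat \<Rightarrow> nat \<Rightarrow> nat set set" where
  "s_cycle_edges k s m =
     (let n = m * (k - s) in
      (\<lambda>j. (\<lambda>t. (j * (k - s) + t) mod n) ` {1..k}) ` {0..<m})"

definition tight_cycle_edges :: "nat \<Rightarrow> nat \<Rightarrow> nat set set" where
  "tight_cycle_edges k n = s_cycle_edges k (k - 1) n"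

definition is_lap_H_eigenvalue :: "nat \<Rightarrow> nat \<Rightarrow> nat set set \<Rightarrow> real \<Rightarrow> bool" where
  "is_lap_H_eigenvalue k n E lam \<longleftrightarrow>
     (\<exists>x :: nat \<Rightarrow> real. (\<exists>i<n. x i \<noteq> 0) \<and>
        (\<forall>i<n. lam * x i ^ (k - 1) =
            real (hdegree E i) * x i ^ (k - 1)
            - (\<Sum>e\<in>{e \<in> E. i \<in> e}. \<Prod>j\<in>e - {i}. x j)))"

definition lap_H_largest :: "nat \<Rightarrow> nat \<Rightarrow> nat set set \<Rightarrow> real" where
  "lap_H_largest k n E = Sup {lam. is_lap_H_eigenvalue k n E lam}"

end

theory Submission
  imports Defs
begin

text \<open>Every vertex of the tight cycle lies in exactly the k edges starting at i - 1, ..., i - k,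
  so all degrees are k. Every Laplacian H-eigenvalue is bounded by twice the maximum degree (compare
  both sides of the eigen-equation at a coordinate of maximal modulus), so the eigenvalues form a
  set that is bounded above and its supremum dominates each of them. For even n the alternating vector x_v = (-1)^v is well defined
  on the cycle; since k = 4l+3, the product of x over an edge starting at j is (-1)^j, hence the
  product over the edge starting at i - t with i removed is (-1)^t, and summing over t = 1..k gives
  -1. With x_i^(k-1) = 1 the eigen-equation then reads k + 1 = k - (-1).\<close>

definition tight_edge :: "nat \<Rightarrow> nat \<Rightarrow> nat \<Rightarrow> nat set" where
  "tight_edge n k j = (\<lambda>t. (j + t) mod n) ` {1..k}"

lemma tight_cycle_edges_eq: "1 \<le> k \<Longrightarrow> tight_cycle_edges k n = tight_edge n k ` {0..<n}"
  unfolding tight_cycle_edges_def s_cycle_edges_def tight_edge_def by (simp add: Let_def)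

lemma inj_on_add_mod: "inj_on (\<lambda>t. (j + t) mod n) {..<n::nat}"
proof (rule inj_onI)
  fix t t' assume "t \<in> {..<n}" "t' \<in> {..<n}" and eq: "(j + t) mod n = (j + t') mod n"
  from eq have "t mod n = t' mod n"
    by (simp add: nat_mod_eq_iff)
  with \<open>t \<in> {..<n}\<close> \<open>t' \<in> {..<n}\<close> show "t = t'"
    by simp
qed

lemma tight_edge_subset: "0 < n \<Longrightarrow> tight_edge n k j \<subseteq> {0..<n}"
  by (auto simp: tight_edge_def)

lemma card_tight_edge:
  assumes "k < n"
  shows "card (tight_edge n k j) = k"
proof -
  have "inj_on (\<lambda>t. (j + t) mod n) {1..k}"
    using assms by (intro inj_on_subset[OF inj_on_add_mod]) auto
  then show ?thesis
    unfolding tight_edge_def by (simp add: card_image)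
qed

lemma start_not_in_tight_edge:
  assumes "k < n" "j < n"
  shows "j \<notin> tight_edge n k j"
proof
  assume "j \<in> tight_edge n k j"
  then obtain t where t: "t \<in> {1..k}" "(j + 0) mod n = (j + t) mod n"
    using assms(2) unfolding tight_edge_def by auto
  have "0 = t"
    using inj_onD[OF inj_on_add_mod t(2)] t(1) assms(1) by simp
  with t(1) show False by simp
qed

lemma mem_tight_edge_shift:
  assumes "t \<in> {1..k}" "k < n" "i < n"
  shows "i \<in> tight_edge n k ((i + n - t) mod n)"
proof -
  have "((i + n - t) mod n + t) mod n = i"
    using assms by (simp add: mod_add_left_eq)
  then show ?thesis
    unfolding tight_edge_def using assms(1) by (intro image_eqI[where x = t]) simp_all
qed

lemma tight_edge_start_eq:
  assumes "k < n" "j < n" "i \<in> tight_edge n k j"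
  shows "\<exists>t\<in>{1..k}. j = (i + n - t) mod n"
proof -
  obtain t where t: "t \<in> {1..k}" "i = (j + t) mod n"
    using assms(3) unfolding tight_edge_def by auto
  have "j = (i + n - t) mod n"
  proof (cases "j + t < n")
    case True
    then show ?thesis using t assms by simp
  next
    case False
    then have "i + n - t = j" using t assms by (simp add: le_mod_geq)
    then show ?thesis using assms by simp
  qed
  with t show ?thesis by blast
qed

lemma tight_edges_containing:
  assumes "k < n" "i < n"
  shows "{e \<in> tight_edge n k ` {0..<n}. i \<in> e} = (\<lambda>t. tight_edge n k ((i + n - t) mod n)) ` {1..k}"
proof
  show "{e \<in> tight_edge n k ` {0..<n}. i \<in> e} \<subseteq> (\<lambda>t. tight_edge n k ((i + n - t) mod n)) ` {1..k}"
    using tight_edge_start_eq[OF assms(1)] by fastforce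
  show "(\<lambda>t. tight_edge n k ((i + n - t) mod n)) ` {1..k} \<subseteq> {e \<in> tight_edge n k ` {0..<n}. i \<in> e}"
    using mem_tight_edge_shift assms by auto
qed

lemma inj_on_tight_edges_containing:
  assumes "k < n" "i < n"
  shows "inj_on (\<lambda>t. tight_edge n k ((i + n - t) mod n)) {1..k}"
proof -
  have False if "t \<in> {1..k}" "t' \<in> {1..k}" "t < t'"
      "tight_edge n k ((i + n - t) mod n) = tight_edge n k ((i + n - t') mod n)" for t t'
  proof -
    \<comment> \<open>the start of the first edge lies in the second, but no edge contains its own start\<close>
    have "((i + n - t') mod n + (t' - t)) mod n = ((i + n - t') + (t' - t)) mod n"
      by (simp only: mod_add_left_eq)
    also have "(i + n - t') + (t' - t) = i + n - t"
      using that assms by simp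
    finally have "((i + n - t') mod n + (t' - t)) mod n = (i + n - t) mod n" .
    then have "(i + n - t) mod n \<in> tight_edge n k ((i + n - t') mod n)"
      unfolding tight_edge_def using that by (intro image_eqI[where x = "t' - t"]) auto
    moreover have "(i + n - t) mod n < n"
      using assms by simp
    ultimately show False
      using that(4) start_not_in_tight_edge[OF assms(1)] by auto
  qed
  note later_start_collision = this
  show ?thesis
  proof (rule inj_onI, rule ccontr)
    fix t t' assume "t \<in> {1..k}" "t' \<in> {1..k}" "t \<noteq> t'"
      "tight_edge n k ((i + n - t) mod n) = tight_edge n k ((i + n - t') mod n)"
    then show False
      using later_start_collision[of t t'] later_start_collision[of t' t] by (cases "t < t'") auto
  qed
qed

lemma hdegree_tight_cycle:
  assumes "k < n" "i < n"
  shows "hdegree (tight_edge n k ` {0..<n}) i = k"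
  unfolding hdegree_def tight_edges_containing[OF assms]
  using card_image[OF inj_on_tight_edges_containing[OF assms]] by simp

lemma lap_H_eigenvalue_abs_le:
  assumes uniform: "\<And>e. e \<in> E \<Longrightarrow> e \<subseteq> {0..<n} \<and> card e = k"
    and degree: "\<And>i. i < n \<Longrightarrow> hdegree E i \<le> D"
    and "is_lap_H_eigenvalue k n E lam"
  shows "\<bar>lam\<bar> \<le> 2 * real D"
proof -
  obtain x i1 where i1: "i1 < n" "x i1 \<noteq> 0"
    and eq: "\<And>i. i < n \<Longrightarrow> lam * x i ^ (k - 1) =
      real (hdegree E i) * x i ^ (k - 1) - (\<Sum>e\<in>{e \<in> E. i \<in> e}. \<Prod>j\<in>e - {i}. x j)"
    using assms(3) unfolding is_lap_H_eigenvalue_def by blast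
  define M where "M = Max ((\<lambda>i. \<bar>x i\<bar>) ` {0..<n})"
  have le_M: "\<bar>x i\<bar> \<le> M" if "i < n" for i
    unfolding M_def using that by (intro Max_ge) auto
  obtain i0 where i0: "i0 < n" "\<bar>x i0\<bar> = M"
  proof -
    have "M \<in> (\<lambda>i. \<bar>x i\<bar>) ` {0..<n}"
      unfolding M_def using i1 by (intro Max_in) auto
    then show ?thesis using that by auto
  qed
  define P where "P = M ^ (k - 1)"
  have "P > 0"
    unfolding P_def using le_M[OF i1(1)] i1(2) by simp
  have prod_le: "\<bar>\<Prod>j\<in>e - {i0}. x j\<bar> \<le> P" if "e \<in> E" "i0 \<in> e" for e
  proof -
    have sub: "e \<subseteq> {0..<n}" and "card e = k"
      using uniform[OF that(1)] by auto
    then have "card (e - {i0}) = k - 1"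
      using that(2) finite_subset[OF sub] by (simp add: card_Diff_singleton)
    have "\<bar>\<Prod>j\<in>e - {i0}. x j\<bar> = (\<Prod>j\<in>e - {i0}. \<bar>x j\<bar>)"
      by (simp add: abs_prod)
    also have "\<dots> \<le> (\<Prod>j\<in>e - {i0}. M)"
      using sub le_M by (intro prod_mono) auto
    also have "\<dots> = P"
      unfolding P_def using \<open>card (e - {i0}) = k - 1\<close> by simp
    finally show ?thesis .
  qed
  have "\<bar>\<Sum>e\<in>{e \<in> E. i0 \<in> e}. \<Prod>j\<in>e - {i0}. x j\<bar> \<le> (\<Sum>e\<in>{e \<in> E. i0 \<in> e}. P)"
    using prod_le by (intro order.trans[OF sum_abs] sum_mono) auto
  also have "\<dots> = real (hdegree E i0) * P"
    unfolding hdegree_def by simp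
  finally have sum_le: "\<bar>\<Sum>e\<in>{e \<in> E. i0 \<in> e}. \<Prod>j\<in>e - {i0}. x j\<bar> \<le> real (hdegree E i0) * P" .
  have "\<bar>x i0 ^ (k - 1)\<bar> = P"
    unfolding P_def by (simp add: power_abs i0(2))
  then have "\<bar>lam\<bar> * P = \<bar>lam * x i0 ^ (k - 1)\<bar>"
    by (simp add: abs_mult)
  also have "\<dots> \<le> \<bar>real (hdegree E i0) * x i0 ^ (k - 1)\<bar>
      + \<bar>\<Sum>e\<in>{e \<in> E. i0 \<in> e}. \<Prod>j\<in>e - {i0}. x j\<bar>"
    unfolding eq[OF i0(1)] by (rule abs_triangle_ineq4)
  also have "\<dots> \<le> real (hdegree E i0) * P + real (hdegree E i0) * P"
    using sum_le \<open>\<bar>x i0 ^ (k - 1)\<bar> = P\<close> by (simp add: abs_mult mult.commute)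
  also have "\<dots> \<le> 2 * real D * P"
    using degree[OF i0(1)] \<open>P > 0\<close> by simp
  finally show ?thesis
    using \<open>P > 0\<close> by simp
qed

lemma bdd_above_tight_cycle_lap_H_eigenvalues:
  assumes "k < n"
  shows "bdd_above {lam. is_lap_H_eigenvalue k n (tight_edge n k ` {0..<n}) lam}"
proof (rule bdd_aboveI[where M = "2 * real k"])
  fix lam assume "lam \<in> {lam. is_lap_H_eigenvalue k n (tight_edge n k ` {0..<n}) lam}"
  then have "\<bar>lam\<bar> \<le> 2 * real k"
  proof (intro lap_H_eigenvalue_abs_le)
    show "e \<subseteq> {0..<n} \<and> card e = k" if "e \<in> tight_edge n k ` {0..<n}" for e
      using that tight_edge_subset[of n k] card_tight_edge[OF assms] assms by auto
    show "hdegree (tight_edge n k ` {0..<n}) i \<le> k" if "i < n" for i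
      using hdegree_tight_cycle[OF assms that] by simp
  qed simp
  then show "lam \<le> 2 * real k"
    by simp
qed

lemma minus_one_power_mod_even: "even (n::nat) \<Longrightarrow> (-1::real) ^ (m mod n) = (-1) ^ m"
proof -
  assume "even n"
  then have "even (m mod n) \<longleftrightarrow> even m"
    by (metis div_mult_mod_eq even_add even_mult_iff)
  then show ?thesis
    by (simp add: minus_one_power_iff)
qed

lemma sum_minus_one_power_odd:
  assumes "odd k"
  shows "(\<Sum>t = 1..k. (-1::real) ^ t) = -1"
proof -
  obtain m where "k = 2 * m + 1"
    using assms oddE by blast
  moreover have "(\<Sum>t = 1..2 * m + 1. (-1::real) ^ t) = -1"
  proof (induction m)
    case (Suc m)
    have "{1..2 * Suc m + 1} = insert (2 * m + 3) (insert (2 * m + 2) {1..2 * m + 1})"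
      by auto
    then show ?case
      using Suc by simp
  qed simp
  ultimately show ?thesis
    by simp
qed

lemma prod_alternating_tight_edge:
  assumes "even n" "k = 4 * l + 3" "k < n"
  shows "(\<Prod>v\<in>tight_edge n k j. (-1::real) ^ v) = (-1) ^ j"
proof -
  have inj: "inj_on (\<lambda>t. (j + t) mod n) {1..k}"
    using assms(3) by (intro inj_on_subset[OF inj_on_add_mod]) auto
  have "(\<Prod>v\<in>tight_edge n k j. (-1::real) ^ v) = (\<Prod>t = 1..k. (-1::real) ^ ((j + t) mod n))"
    unfolding tight_edge_def by (subst prod.reindex[OF inj]) simp
  also have "\<dots> = (\<Prod>t = 1..k. (-1::real) ^ (j + t))"
    using minus_one_power_mod_even[OF assms(1)] by simp
  also have "\<dots> = (-1) ^ (\<Sum>t = 1..k. j + t)"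
    by (simp add: power_sum)
  also have "(\<Sum>t = 1..k. j + t) = k * j + k * (k + 1) div 2"
    using gauss_sum_from_Suc_0[of k, where 'a = nat] by (simp add: sum.distrib)
  also have "k * (k + 1) div 2 = (4 * l + 3) * (2 * l + 2)"
  proof -
    have "k * (k + 1) = 2 * ((4 * l + 3) * (2 * l + 2))"
      using assms(2) by (simp add: algebra_simps)
    then show ?thesis
      by simp
  qed
  finally show ?thesis
    using assms(2) by (simp add: minus_one_power_iff)
qed

lemma prod_alternating_tight_edge_minus_vertex:
  assumes "even n" "k = 4 * l + 3" "k < n" "i < n" "t \<in> {1..k}"
  shows "(\<Prod>v\<in>tight_edge n k ((i + n - t) mod n) - {i}. (-1::real) ^ v) = (-1) ^ t"
proof -
  define e where "e = tight_edge n k ((i + n - t) mod n)"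
  have "finite e" and "i \<in> e"
    unfolding e_def tight_edge_def using mem_tight_edge_shift[unfolded tight_edge_def] assms by auto
  then have "(\<Prod>v\<in>e. (-1::real) ^ v) = (-1) ^ i * (\<Prod>v\<in>e - {i}. (-1) ^ v)"
    by (rule prod.remove)
  then have "(\<Prod>v\<in>e - {i}. (-1::real) ^ v) = (-1) ^ i * (\<Prod>v\<in>e. (-1) ^ v)"
    by (simp add: minus_one_power_iff split: if_splits)
  also have "\<dots> = (-1) ^ (i + (i + n - t))"
    unfolding e_def prod_alternating_tight_edge[OF assms(1-3)] minus_one_power_mod_even[OF assms(1)]
    by (simp add: power_add)
  also have "\<dots> = (-1) ^ t"
  proof -
    have "i + (i + n - t) + t = 2 * i + n"
      using assms by auto
    then have "even (i + (i + n - t)) \<longleftrightarrow> even t"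
      using assms(1) by (metis even_add even_mult_iff even_numeral)
    then show ?thesis
      by (simp add: minus_one_power_iff)
  qed
  finally show ?thesis
    unfolding e_def .
qed

lemma alternating_lap_H_eigenvalue:
  assumes "even n" "k = 4 * l + 3" "k < n"
  shows "is_lap_H_eigenvalue k n (tight_edge n k ` {0..<n}) (real k + 1)"
  unfolding is_lap_H_eigenvalue_def
proof (intro exI[where x = "\<lambda>v. (-1::real) ^ v"] conjI allI impI)
  show "\<exists>i<n. (-1::real) ^ i \<noteq> 0"
    using assms by auto
  fix i assume "i < n"
  have "((-1::real) ^ i) ^ (k - 1) = 1"
    using assms(2) by (simp flip: power_mult)
  moreover have "(\<Sum>e\<in>{e \<in> tight_edge n k ` {0..<n}. i \<in> e}. \<Prod>j\<in>e - {i}. (-1::real) ^ j)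
      = (\<Sum>t = 1..k. (-1) ^ t)"
    unfolding tight_edges_containing[OF assms(3) \<open>i < n\<close>]
    by (subst sum.reindex[OF inj_on_tight_edges_containing[OF assms(3) \<open>i < n\<close>]])
      (simp add: prod_alternating_tight_edge_minus_vertex[OF assms \<open>i < n\<close>])
  moreover have "(\<Sum>t = 1..k. (-1::real) ^ t) = -1"
    using assms(2) by (intro sum_minus_one_power_odd) simp
  ultimately show "(real k + 1) * ((-1) ^ i) ^ (k - 1) =
      real (hdegree (tight_edge n k ` {0..<n}) i) * ((-1) ^ i) ^ (k - 1) -
      (\<Sum>e\<in>{e \<in> tight_edge n k ` {0..<n}. i \<in> e}. \<Prod>j\<in>e - {i}. (-1) ^ j)"
    using hdegree_tight_cycle[OF assms(3) \<open>i < n\<close>] by simp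
qed

theorem proposition8p1:
  fixes l k n :: nat
  assumes "k = 4 * l + 3"
    and "n \<ge> k + 1"
  shows "max_degree n (tight_cycle_edges k n) = k
         \<and> (even n \<longrightarrow> lap_H_largest k n (tight_cycle_edges k n) \<ge> real k + 1)"
proof -
  have "k < n" and E: "tight_cycle_edges k n = tight_edge n k ` {0..<n}"
    using assms by (simp_all add: tight_cycle_edges_eq)
  have "hdegree (tight_edge n k ` {0..<n}) ` {0..<n} = {k}"
    using hdegree_tight_cycle[OF \<open>k < n\<close>] \<open>k < n\<close> by auto
  then have "max_degree n (tight_cycle_edges k n) = k"
    unfolding max_degree_def E by simp
  moreover have "lap_H_largest k n (tight_cycle_edges k n) \<ge> real k + 1" if "even n"
  proof -
    have "bdd_above {lam. is_lap_H_eigenvalue k n (tight_edge n k ` {0..<n}) lam}"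
      by (rule bdd_above_tight_cycle_lap_H_eigenvalues[OF \<open>k < n\<close>])
    then show ?thesis
      unfolding lap_H_largest_def E
      by (rule cSup_upper[rotated]) (simp add: alternating_lap_H_eigenvalue[OF that assms(1) \<open>k < n\<close>])
  qed
  ultimately show ?thesis
    by blast
qed

end
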